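(* For $\boldsymbol\ell\in\{0,\dots,N-1\}^d$ let $$\psi_{\boldsymbol\ell}=\frac1{\sqrt{\|G_{\boldsymbol\ell}\|_1}}\sum_{\mathbf{m}\in\mathbb{Z}^d}G[\mathbf{m}N+\boldsymbol\ell]\,\phi_{\mathbf{m}N+\boldsymbol\ell}.$$ Then $\mathcal{T}_K^{N,d}\psi_{\boldsymbol\ell}=\|G_{\boldsymbol\ell}\|_1\psi_{\boldsymbol\ell}$, $\|\psi_{\boldsymbol\ell}\|_{\mathcal{H}}=1$, $\|\psi_{\boldsymbol\ell}\|=\frac{\|G_{\boldsymbol\ell}\|}{\sqrt{\|G_{\boldsymbol\ell}\|_1}}$, and $\langle\psi_{\boldsymbol\ell},\psi_{\mathbf{k}}\rangle=0$ for $\mathbf{k}\ne\boldsymbol\ell$.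
   Context: Let $\mathbb{T}=[-\pi,\pi)$, $j=\sqrt{-1}$, $\phi_{\mathbf{k}}(\mathbf{x})=e^{j\langle\mathbf{k},\mathbf{x}\rangle}$ for $\mathbf{k}\in\mathbb{Z}^d$, $\mu$ uniform probability measure on $\mathbb{T}^d$, $\langle\cdot,\cdot\rangle$ and $\|\cdot\|$ the $L^2_\mu$ inner product and norm. $K(\mathbf{x},\mathbf{x}')=g(M((\mathbf{x}-\mathbf{x}')\bmod\mathbb{T}^d))$ is a positive definite kernel with RKHS $\mathcal{H}$ (coordinatewise $\theta\bmod\mathbb{T}:=((\theta+\pi)\bmod2\pi)-\pi$), Fourier coefficients $G[\mathbf{k}]=(2\pi)^{-d}\int_{\mathbb{T}^d}g(M\boldsymbol\theta)e^{-j\langle\mathbf{k},\boldsymbol\theta\rangle}d\boldsymbol\theta\ge0$, $\sum G[\mathbf{k}]<\infty$, and $\|f\|_{\mathcal{H}}^2=\sum_{\mathbf{k}}|\langle f,\phi_{\mathbf{k}}\rangle|^2/G[\mathbf{k}]$. For even $N$, grid points $\mathbf{x}_{\mathbf{p}}$, $\mathbf{p}\in\{0,\dots,N-1\}^d$, $(\mathbf{x}_{\mathbf{p}})_i=\frac{2\pi}{N}p_i-\pi$, with invertible kernel matrix. $\mathcal{T}_K^{N,d}f(\mathbf{x})=N^{-d}\sum_{\mathbf{p}}K(\mathbf{x},\mathbf{x}_{\mathbf{p}})f(\mathbf{x}_{\mathbf{p}})$. $\|G_{\boldsymbol\ell}\|_1=\sum_{\mathbf{m}}|G[\mathbf{m}N+\boldsymbol\ell]|$,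 $\|G_{\boldsymbol\ell}\|^2=\sum_{\mathbf{m}}|G[\mathbf{m}N+\boldsymbol\ell]|^2$. *)

theory Defs
  imports "HOL-Analysis.Analysis"
begin

definition tmod :: "real \<Rightarrow> real" where
  "tmod t = (t + pi) - 2 * pi * of_int \<lfloor>(t + pi) / (2 * pi)\<rfloor> - pi"

definition vtmod :: "real^'n \<Rightarrow> real^'n" where
  "vtmod x = (\<chi> i. tmod (x $ i))"

definition torus :: "(real^'n) set" where
  "torus = {x. \<forall>i. - pi \<le> x $ i \<and> x $ i < pi}"

definition phi :: "int^'n \<Rightarrow> real^'n \<Rightarrow> complex" where
  "phi k x = cis (\<Sum>i\<in>UNIV. of_int (k $ i) * x $ i)"

definition kern :: "(real^'n \<Rightarrow> real) \<Rightarrow> real^'n^'n \<Rightarrow> real^'n \<Rightarrow> real^'n \<Rightarrow> real" where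
  "kern g M x x' = g (M *v vtmod (x - x'))"

definition fcoef :: "(real^'n \<Rightarrow> real) \<Rightarrow> real^'n^'n \<Rightarrow> int^'n \<Rightarrow> complex" where
  "fcoef g M k = complex_of_real (1 / (2 * pi) ^ CARD('n)) *
     integral (cbox (\<chi> i. - pi) (\<chi> i. pi))
       (\<lambda>\<theta>. complex_of_real (g (M *v \<theta>)) * cnj (phi k \<theta>))"

definition l2_inner :: "(real^'n \<Rightarrow> complex) \<Rightarrow> (real^'n \<Rightarrow> complex) \<Rightarrow> complex" where
  "l2_inner f h = complex_of_real (1 / (2 * pi) ^ CARD('n)) *
     integral (cbox (\<chi> i. - pi) (\<chi> i. pi)) (\<lambda>x. f x * cnj (h x))"

definition l2_norm :: "(real^'n \<Rightarrow> complex) \<Rightarrow> real" where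
  "l2_norm f = sqrt (Re (l2_inner f f))"

definition rkhs_norm :: "(int^'n \<Rightarrow> complex) \<Rightarrow> (real^'n \<Rightarrow> complex) \<Rightarrow> real" where
  "rkhs_norm G f = sqrt (\<Sum>\<^sub>\<infinity>k. (cmod (l2_inner f (phi k)))\<^sup>2 / Re (G k))"

definition pd_kernel :: "'a set \<Rightarrow> ('a \<Rightarrow> 'a \<Rightarrow> real) \<Rightarrow> bool" where
  "pd_kernel S K \<longleftrightarrow> (\<forall>x\<in>S. \<forall>y\<in>S. K x y = K y x) \<and>
     (\<forall>n (xs :: nat \<Rightarrow> 'a) (c :: nat \<Rightarrow> real). (\<forall>i<n. xs i \<in> S) \<longrightarrow>
        0 \<le> (\<Sum>i<n. \<Sum>j<n. c i * c j * K (xs i) (xs j)))"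

definition grid_idx :: "nat \<Rightarrow> (nat^'n) set" where
  "grid_idx N = {p. \<forall>i. p $ i < N}"

definition grid_pt :: "nat \<Rightarrow> nat^'n \<Rightarrow> real^'n" where
  "grid_pt N p = (\<chi> i. 2 * pi / real N * real (p $ i) - pi)"

definition T_op :: "(real^'n \<Rightarrow> real^'n \<Rightarrow> real) \<Rightarrow> nat \<Rightarrow> (real^'n \<Rightarrow> complex) \<Rightarrow> real^'n \<Rightarrow> complex" where
  "T_op K N f x = complex_of_real (1 / real N ^ CARD('n)) *
     (\<Sum>p\<in>grid_idx N. complex_of_real (K x (grid_pt N p)) * f (grid_pt N p))"

text \<open>Kernel matrix (K(x_p, x_q))_{p,q} on the grid is invertible (square matrix: injective).\<close>
definition grid_kernel_matrix_invertible :: "(real^'n \<Rightarrow> real^'n \<Rightarrow> real) \<Rightarrow> nat \<Rightarrow> bool" where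
  "grid_kernel_matrix_invertible K N \<longleftrightarrow>
     (\<forall>c :: nat^'n \<Rightarrow> real.
        (\<forall>p\<in>grid_idx N. (\<Sum>q\<in>grid_idx N. K (grid_pt N p) (grid_pt N q) * c q) = 0)
        \<longrightarrow> (\<forall>q\<in>grid_idx N. c q = 0))"

definition aliased :: "nat \<Rightarrow> int^'n \<Rightarrow> int^'n \<Rightarrow> int^'n" where
  "aliased N m l = (\<chi> i. m $ i * int N + l $ i)"

definition G_l1 :: "(int^'n \<Rightarrow> complex) \<Rightarrow> nat \<Rightarrow> int^'n \<Rightarrow> real" where
  "G_l1 G N l = (\<Sum>\<^sub>\<infinity>m. cmod (G (aliased N m l)))"

definition G_l2 :: "(int^'n \<Rightarrow> complex) \<Rightarrow> nat \<Rightarrow> int^'n \<Rightarrow> real" where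
  "G_l2 G N l = sqrt (\<Sum>\<^sub>\<infinity>m. (cmod (G (aliased N m l)))\<^sup>2)"

definition psi :: "(int^'n \<Rightarrow> complex) \<Rightarrow> nat \<Rightarrow> int^'n \<Rightarrow> real^'n \<Rightarrow> complex" where
  "psi G N l x = complex_of_real (1 / sqrt (G_l1 G N l)) *
     (\<Sum>\<^sub>\<infinity>m. G (aliased N m l) * phi (aliased N m l) x)"

end

theory Submission
  imports Defs
begin

(* Sampling on the grid aliases frequencies: the grid sum of phi_k is N^d when every component of k
   is divisible by N and 0 otherwise.  Inserting the expansion
   K(x, x') = sum_k G[k] phi_k(x) conj(phi_k(x')) therefore gives
   sum_p K(x, x_p) phi_j(x_p) = N^d S_j(x), where S_j = sum_{k = j mod N} G[k] phi_k depends only on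
   the residue class of j.  Since psi_l is a multiple of S_l = sum_m G[mN + l] phi_{mN + l}, this yields
   T psi_l = (sum_m G[mN + l]) psi_l = ||G_l||_1 psi_l.  The series converge uniformly because G is
   summable, so L^2 inner products with them can be computed termwise from the orthonormality of the
   phi_k; this gives the norms and the orthogonality.  Finally ||G_l||_1 > 0, for otherwise S_l = 0 and
   the grid samples of phi_l would lie in the kernel of the invertible kernel matrix. *)

lemma has_sum_sum:
  fixes f :: "'p \<Rightarrow> 'a \<Rightarrow> 'b::topological_comm_monoid_add"
  assumes "finite P" "\<And>p. p \<in> P \<Longrightarrow> (f p has_sum s p) A"
  shows "((\<lambda>k. \<Sum>p\<in>P. f p k) has_sum (\<Sum>p\<in>P. s p)) A"
  using assms by (induction P rule: finite_induct) (auto intro: has_sum_add)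

lemma summable_on_mult_bounded:
  fixes G w :: "'a \<Rightarrow> complex"
  assumes G: "G summable_on A" and w: "\<And>k. norm (w k) \<le> B"
  shows "(\<lambda>k. G k * w k) summable_on A"
proof -
  from G have "(\<lambda>k. norm (G k)) summable_on A"
    by (simp only: summable_on_iff_abs_summable_on_complex)
  then have "(\<lambda>k. norm (G k * w k)) summable_on A"
    by (rule Infinite_Sum.abs_summable_on_comparison_test'[OF summable_on_cmult_left[where c=B]])
      (simp add: norm_mult mult_left_mono w)
  then show ?thesis
    by (simp only: summable_on_iff_abs_summable_on_complex)
qed

section \<open>Characters\<close>

lemma phi_add: "phi k (x + y) = phi k x * phi k y"
  unfolding phi_def by (simp add: cis_mult sum.distrib distrib_left)

lemma norm_phi [simp]: "norm (phi k x) = 1"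
  unfolding phi_def by simp

lemma cnj_phi_mult: "cnj (phi k x) * phi j x = phi (j - k) x"
  unfolding phi_def by (simp add: cis_cnj cis_mult sum_subtractf[symmetric] algebra_simps)

lemma continuous_on_phi [continuous_intros]: "continuous_on S (phi k)"
  unfolding phi_def by (intro continuous_intros)

lemma phi_add_axis: "phi k (x + t *\<^sub>R axis i 1) = cis (of_int (k $ i) * t) * phi k x"
proof -
  have "(\<Sum>j\<in>UNIV. of_int (k $ j) * (t *\<^sub>R axis i (1::real)) $ j) = of_int (k $ i) * t"
    by (simp add: axis_def if_distrib cong: if_cong)
  then show ?thesis
    unfolding phi_add by (simp add: phi_def mult.commute)
qed

lemma integral_cbox_shift_periodic:
  fixes f :: "real^'n \<Rightarrow> 'b::banach"
  assumes f: "\<And>a b. f integrable_on cbox a b"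
    and periodic: "\<And>x. f (x + p *\<^sub>R axis i 1) = f x"
    and width: "b $ i = a $ i + p" and t: "0 \<le> t" "t \<le> p"
  shows "integral (cbox (a + t *\<^sub>R axis i 1) (b + t *\<^sub>R axis i 1)) f = integral (cbox a b) f"
proof -
  let ?e = "t *\<^sub>R axis i 1 :: real^'n" and ?pe = "p *\<^sub>R axis i 1 :: real^'n"
  define a' where "a' = (\<chi> j. if j = i then a $ i + t else a $ j)"
  define b' where "b' = (\<chi> j. if j = i then a $ i + t else b $ j)"
  have split: "integral (cbox c d) f = integral (cbox c (\<chi> j. if j = i then s else d $ j)) f
      + integral (cbox (\<chi> j. if j = i then s else c $ j) d) f"
    if "c $ i \<le> s" "s \<le> d $ i" for c d :: "real^'n" and s
  proof -
    have "(\<chi> j. if j = i then min (d $ i) s else d $ j) = (\<chi> j. if j = i then s else d $ j)"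
      "(\<chi> j. if j = i then max (c $ i) s else c $ j) = (\<chi> j. if j = i then s else c $ j)"
      using that by (simp_all add: vec_eq_iff)
    then show ?thesis
      using integral_split[OF f, of "axis i 1" c d s]
      by (simp add: inner_axis interval_split_cart[unfolded interval_cbox_cart])
  qed
  have "integral (cbox a b) f = integral (cbox a b') f + integral (cbox a' b) f"
    using split[of a "a $ i + t" b] width t by (simp add: a'_def b'_def)
  moreover have "integral (cbox (a + ?e) (b + ?e)) f = integral (cbox a' b) f + integral (cbox (a + ?pe) (b' + ?pe)) f"
  proof -
    have "(\<chi> j. if j = i then b $ i else (b + ?e) $ j) = b"
      "(\<chi> j. if j = i then b $ i else (a + ?e) $ j) = a + ?pe"
      "a + ?e = a'" "b + ?e = b' + ?pe"
      using width by (simp_all add: a'_def b'_def vec_eq_iff axis_def)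
    then show ?thesis
      using split[of "a + ?e" "b $ i" "b + ?e"] width t by (simp add: a'_def b'_def)
  qed
  moreover have "integral (cbox (a + ?pe) (b' + ?pe)) f = integral (cbox a b') f"
    using integral_shift_cbox_plus[of a b' f ?pe] by (simp add: o_def add.commute periodic)
  ultimately show ?thesis by simp
qed

lemma integral_phi_cube:
  "integral (cbox (\<chi> i. - pi) (\<chi> i. pi)) (phi k :: real^'n \<Rightarrow> complex)
     = (if k = 0 then of_real ((2 * pi) ^ CARD('n)) else 0)"
proof (cases "k = 0")
  case True
  then have "phi k = (\<lambda>_. 1)"
    by (simp add: phi_def fun_eq_iff)
  moreover have "measure lborel (cbox (\<chi> i. - pi) (\<chi> i. pi :: real^'n)) = (2 * pi) ^ CARD('n)"
    by (subst content_cbox_cart) (auto simp: interval_eq_empty_cart)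
  ultimately show ?thesis
    using True by (simp add: scaleR_conv_of_real)
next
  case False
  then obtain i where "k $ i \<noteq> 0"
    by (metis vec_eq_iff zero_index)
  define h where "h = pi / \<bar>real_of_int (k $ i)\<bar>"
  have "1 \<le> \<bar>real_of_int (k $ i)\<bar>"
    using \<open>k $ i \<noteq> 0\<close> by linarith
  then have h: "0 \<le> h" "h \<le> 2 * pi"
    by (simp_all add: h_def divide_le_eq pi_gt_zero)
  have "real_of_int (k $ i) * h = pi \<or> real_of_int (k $ i) * h = - pi"
    using \<open>k $ i \<noteq> 0\<close> by (cases "k $ i > 0") (auto simp: h_def)
  then have half_period: "phi k (x + h *\<^sub>R axis i 1) = - phi k x" for x
    by (auto simp: phi_add_axis complex_eq_iff)
  have period: "phi k (x + (2 * pi) *\<^sub>R axis i 1) = phi k x" for x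
    using cis_multiple_2pi[of "of_int (k $ i)"] by (simp add: phi_add_axis mult.commute)
  \<comment> \<open>Shifting the cube by half a period along axis i negates the integral of phi k,
    but does not change it since phi k is 2 pi-periodic along that axis.\<close>
  let ?lo = "\<chi> i. - pi :: real^'n" and ?hi = "\<chi> i. pi :: real^'n" and ?v = "h *\<^sub>R axis i 1 :: real^'n"
  have "integral (cbox ?lo ?hi) (phi k) = integral (cbox (?lo + ?v) (?hi + ?v)) (phi k)"
    using integral_cbox_shift_periodic[where f="phi k" and a="?lo" and b="?hi", OF _ period _ h]
    by (simp add: integrable_continuous continuous_intros)
  also have "\<dots> = integral (cbox ?lo ?hi) (\<lambda>x. - phi k x)"
    using integral_shift_cbox_plus[of ?lo ?hi "phi k" ?v] by (simp add: o_def add.commute half_period)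
  also have "\<dots> = - integral (cbox ?lo ?hi) (phi k)"
    by (rule integral_neg)
  finally show ?thesis
    using False by simp
qed

lemma l2_inner_phi: "l2_inner (phi k) (phi j :: real^'n \<Rightarrow> complex) = (if k = j then 1 else 0)"
proof -
  have "(\<lambda>x. phi k x * cnj (phi j x)) = phi (k - j)"
    using cnj_phi_mult[of j _ k] by (simp add: mult.commute fun_eq_iff)
  then show ?thesis
    unfolding l2_inner_def by (simp add: integral_phi_cube)
qed

lemma l2_inner_cnj: "l2_inner f g = cnj (l2_inner g f)"
proof -
  have "(\<lambda>x. f x * cnj (g x)) = (\<lambda>x. cnj (g x * cnj (f x)))"
    by (simp add: mult.commute)
  then show ?thesis
    unfolding l2_inner_def by (simp add: integral_cnj)
qed

lemma l2_inner_cmult_left: "l2_inner (\<lambda>x. a * f x) g = a * l2_inner f g"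
  unfolding l2_inner_def by (simp add: mult_ac flip: integral_mult_right)

lemma l2_inner_cmult_right: "l2_inner f (\<lambda>x. b * g x) = cnj b * l2_inner f g"
  unfolding l2_inner_def by (simp add: mult_ac flip: integral_mult_right)

section \<open>Sums over the grid\<close>

lemma phi_eq_prod: "phi k x = (\<Prod>i\<in>UNIV. cis (of_int (k $ i) * x $ i))"
  unfolding phi_def by (induction rule: infinite_finite_induct) (auto simp flip: cis_mult)

lemma bij_betw_grid_idx: "bij_betw vec_nth (grid_idx N :: (nat^'n) set) (PiE UNIV (\<lambda>_. {..<N}))"
proof (rule bij_betw_imageI)
  show "inj_on vec_nth (grid_idx N :: (nat^'n) set)"
    by (simp add: inj_on_def vec_eq_iff fun_eq_iff)
  have "f \<in> vec_nth ` grid_idx N" if "f \<in> PiE UNIV (\<lambda>_. {..<N})" for f :: "'n \<Rightarrow> nat"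
    using that by (intro image_eqI[of _ _ "vec_lambda f"]) (auto simp: grid_idx_def PiE_iff)
  then show "vec_nth ` (grid_idx N :: (nat^'n) set) = PiE UNIV (\<lambda>_. {..<N})"
    by (auto simp: grid_idx_def PiE_iff)
qed

lemma finite_grid_idx [simp]: "finite (grid_idx N :: (nat^'n) set)"
  using bij_betw_finite[OF bij_betw_grid_idx] by (simp add: finite_PiE)

lemma grid_pt_in_torus:
  assumes "p \<in> grid_idx N"
  shows "grid_pt N p \<in> torus"
proof -
  have "2 * pi / N * p $ i < 2 * pi" for i
    using assms by (simp add: grid_idx_def divide_less_eq)
  then show ?thesis
    by (simp add: torus_def grid_pt_def)
qed

lemma sum_cis_grid_1d:
  assumes "even N" "N > 0"
  shows "(\<Sum>q<N. cis (of_int d * (2 * pi / N * real q - pi))) = (if int N dvd d then of_nat N else 0)"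
proof -
  define \<omega> where "\<omega> = cis (2 * pi * (of_int d / N))"
  have "cis (of_int d * (2 * pi / N * real q - pi)) = cis (- pi * of_int d) * \<omega> ^ q" for q
  proof -
    have "of_int d * (2 * pi / N * real q - pi) = - pi * of_int d + real q * (2 * pi * (of_int d / N))"
      by (simp add: field_simps)
    then show ?thesis
      unfolding \<omega>_def Complex.DeMoivre cis_mult by simp
  qed
  then have sum_eq: "(\<Sum>q<N. cis (of_int d * (2 * pi / N * real q - pi)))
      = cis (- pi * of_int d) * (\<Sum>q<N. \<omega> ^ q)"
    by (simp add: sum_distrib_left)
  \<comment> \<open>The offset - pi contributes the factor cis (- pi d), which is 1 when N divides d since N is even.\<close>
  show ?thesis
  proof (cases "int N dvd d")
    case True
    then obtain m where "d = int N * m" ..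
    moreover obtain r where "N = 2 * r"
      using \<open>even N\<close> ..
    ultimately have "\<omega> = 1" "cis (- pi * of_int d) = 1"
      using \<open>N > 0\<close> cis_multiple_2pi[of "of_int m"] cis_multiple_2pi[of "- of_int (r * m)"]
      by (simp_all add: \<omega>_def algebra_simps)
    then show ?thesis
      using True sum_eq by simp
  next
    case False
    have "\<omega> \<noteq> 1"
    proof
      assume "\<omega> = 1"
      then have "cos (2 * pi * (of_int d / N)) = 1"
        by (simp add: \<omega>_def complex_eq_iff)
      then obtain n :: int where "2 * pi * (of_int d / N) = of_int n * 2 * pi"
        by (auto simp: cos_one_2pi_int)
      then have "real_of_int d = real_of_int (int N * n)"
        using \<open>N > 0\<close> by (simp add: field_simps)
      then have "d = int N * n"
        by (simp only: of_int_eq_iff)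
      with False show False
        by simp
    qed
    moreover have "\<omega> ^ N = 1"
      using \<open>N > 0\<close> by (simp add: \<omega>_def Complex.DeMoivre)
    ultimately show ?thesis
      using False sum_eq by (simp add: geometric_sum)
  qed
qed

lemma sum_phi_grid:
  assumes "even N" "N > 0"
  shows "(\<Sum>p\<in>grid_idx N. phi k (grid_pt N p :: real^'n))
       = (if \<forall>i. int N dvd k $ i then of_nat N ^ CARD('n) else 0)"
proof -
  let ?f = "\<lambda>i q. cis (of_int (k $ i) * (2 * pi / N * real q - pi))"
  have "(\<Sum>p\<in>grid_idx N. phi k (grid_pt N p :: real^'n)) = (\<Sum>p\<in>grid_idx N. \<Prod>i\<in>UNIV. ?f i (p $ i))"
    by (simp add: phi_eq_prod grid_pt_def)
  also have "\<dots> = (\<Sum>g\<in>PiE UNIV (\<lambda>_. {..<N}). \<Prod>i\<in>UNIV. ?f i (g i))"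
    by (rule sum.reindex_bij_betw[OF bij_betw_grid_idx])
  also have "\<dots> = (\<Prod>i\<in>UNIV. \<Sum>q<N. ?f i q)"
    by (rule prod_sum_PiE[symmetric]) auto
  also have "\<dots> = (\<Prod>i\<in>UNIV. if int N dvd k $ i then of_nat N else 0)"
    using sum_cis_grid_1d[OF assms] by simp
  also have "\<dots> = (if \<forall>i. int N dvd k $ i then of_nat N ^ CARD('n) else 0)"
    by auto
  finally show ?thesis .
qed

section \<open>Aliasing classes\<close>

definition aliases :: "nat \<Rightarrow> int^'n \<Rightarrow> int^'n \<Rightarrow> bool" where
  "aliases N k j \<longleftrightarrow> (\<forall>i. int N dvd k $ i - j $ i)"

lemma aliases_refl [simp]: "aliases N k k"
  by (simp add: aliases_def)

lemma aliases_sym: "aliases N k j \<longleftrightarrow> aliases N j k"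
  unfolding aliases_def by (metis dvd_minus_iff minus_diff_eq)

lemma aliases_aliased_right [simp]: "aliases N k (aliased N m j) \<longleftrightarrow> aliases N k j"
proof -
  have "int N dvd k $ i - (m $ i * int N + j $ i) \<longleftrightarrow> int N dvd k $ i - j $ i" for i
    using dvd_add_times_triv_right_iff[of "int N" "k $ i - j $ i" "- m $ i"] by (simp add: algebra_simps)
  then show ?thesis
    unfolding aliases_def aliased_def by simp
qed

lemma aliases_aliased_left [simp]: "aliases N (aliased N m k) j \<longleftrightarrow> aliases N k j"
  by (metis aliases_aliased_right aliases_sym)

lemma inj_aliased: "N > 0 \<Longrightarrow> inj (\<lambda>m. aliased N m j)"
  unfolding inj_def aliased_def by (simp add: vec_eq_iff)

lemma range_aliased:
  assumes "N > 0"
  shows "range (\<lambda>m. aliased N m j) = {k. aliases N k j}"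
proof (intro set_eqI iffI)
  fix k
  assume "k \<in> {k. aliases N k j}"
  then have "aliased N (\<chi> i. (k $ i - j $ i) div int N) j = k"
    by (simp add: aliases_def aliased_def vec_eq_iff)
  then show "k \<in> range (\<lambda>m. aliased N m j)"
    by (metis rangeI)
qed (metis aliases_refl aliases_aliased_left mem_Collect_eq rangeE)

lemma infsum_aliases:
  assumes "N > 0"
  shows "(\<Sum>\<^sub>\<infinity>k. if aliases N k j then f k else 0) = (\<Sum>\<^sub>\<infinity>m. f (aliased N m j))"
proof -
  have "(\<Sum>\<^sub>\<infinity>k. if aliases N k j then f k else 0) = infsum f {k. aliases N k j}"
    by (rule infsum_cong_neutral) auto
  also have "\<dots> = (\<Sum>\<^sub>\<infinity>m. f (aliased N m j))"
    using infsum_reindex[OF inj_aliased[OF assms]] by (simp add: range_aliased[OF assms] o_def)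
  finally show ?thesis .
qed

lemma summable_on_aliased:
  fixes f :: "int^'n \<Rightarrow> 'a::banach"
  assumes "N > 0" "f summable_on UNIV"
  shows "(\<lambda>m. f (aliased N m j)) summable_on UNIV"
  using summable_on_reindex[OF inj_aliased[OF assms(1)]] summable_on_subset_banach[OF assms(2)]
  by (auto simp: o_def)

lemma aliases_imp_eq:
  assumes "aliases N k j" "\<forall>i. 0 \<le> k $ i \<and> k $ i < int N" "\<forall>i. 0 \<le> j $ i \<and> j $ i < int N"
  shows "k = j"
proof -
  have "k $ i = j $ i" for i
  proof -
    obtain t where t: "k $ i - j $ i = int N * t"
      using assms(1) unfolding aliases_def by blast
    have "\<bar>int N * t\<bar> < int N"
      using assms(2,3) t[symmetric] by (smt (verit))
    moreover have "int N \<le> \<bar>int N * t\<bar>" if "t \<noteq> 0"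
      using that mult_left_mono[of 1 "\<bar>t\<bar>" "int N"] by (simp add: abs_mult)
    ultimately have "t = 0"
      by linarith
    then show ?thesis
      using t by simp
  qed
  then show ?thesis
    by (simp add: vec_eq_iff)
qed

section \<open>Uniformly convergent series of characters\<close>

text \<open>Uniform convergence is handled in the Banach space of bounded continuous functions, where point
  evaluation and the L2 pairing with a continuous function are bounded linear maps.\<close>

instance bcontfun :: (metric_space, banach) banach ..

lemma bounded_linear_apply_bcontfun: "bounded_linear (\<lambda>f. apply_bcontfun f x)"
  by (rule bounded_linear_intro[of _ 1]) (auto simp: norm_bounded)

lemma bounded_linear_l2_inner_bcontfun:
  fixes h :: "real^'n \<Rightarrow> complex"
  assumes h: "continuous_on UNIV h"
  shows "bounded_linear (\<lambda>f. l2_inner (apply_bcontfun f) h)"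
proof -
  let ?C = "cbox (\<chi> i. - pi) (\<chi> i. pi) :: (real^'n) set"
  have int: "(\<lambda>x. apply_bcontfun f x * cnj (h x)) integrable_on ?C"
    for f :: "(real^'n) \<Rightarrow>\<^sub>C complex"
    using continuous_on_subset[OF h subset_UNIV]
    by (intro integrable_continuous continuous_intros continuous_on_apply_bcontfun)
  have "bounded (h ` ?C)"
    using compact_continuous_image[OF continuous_on_subset[OF h] compact_cbox, of "\<chi> i. - pi" "\<chi> i. pi"]
    by (simp add: compact_imp_bounded)
  then obtain B where B: "\<And>x. x \<in> ?C \<Longrightarrow> norm (h x) \<le> B"
    unfolding bounded_iff by blast
  define c :: complex where "c = of_real (1 / (2 * pi) ^ CARD('n))"
  show ?thesis
  proof (rule bounded_linear_intro[of _ "norm c * (B * measure lborel ?C)"])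
    fix f g :: "(real^'n) \<Rightarrow>\<^sub>C complex"
    show "l2_inner (apply_bcontfun (f + g)) h = l2_inner (apply_bcontfun f) h + l2_inner (apply_bcontfun g) h"
      unfolding l2_inner_def by (simp add: distrib_right integral_add[OF int int] distrib_left)
  next
    fix r and f :: "(real^'n) \<Rightarrow>\<^sub>C complex"
    show "l2_inner (apply_bcontfun (r *\<^sub>R f)) h = r *\<^sub>R l2_inner (apply_bcontfun f) h"
      unfolding l2_inner_def by (simp add: scaleR_conv_of_real mult.assoc mult.left_commute)
  next
    fix f :: "(real^'n) \<Rightarrow>\<^sub>C complex"
    have "norm (integral ?C (\<lambda>x. apply_bcontfun f x * cnj (h x))) \<le> integral ?C (\<lambda>x. norm f * B)"
    proof (rule integral_norm_bound_integral[OF int])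
      show "(\<lambda>x. norm f * B) integrable_on ?C"
        by (intro integrable_continuous continuous_intros)
      show "norm (apply_bcontfun f x * cnj (h x)) \<le> norm f * B" if "x \<in> ?C" for x
        unfolding norm_mult complex_mod_cnj using that by (intro mult_mono norm_bounded B) auto
    qed
    also have "\<dots> = norm f * (B * measure lborel ?C)"
      by simp
    finally have "norm (integral ?C (\<lambda>x. apply_bcontfun f x * cnj (h x))) \<le> norm f * (B * measure lborel ?C)" .
    from mult_left_mono[OF this norm_ge_zero[of c]]
    show "norm (l2_inner (apply_bcontfun f) h) \<le> norm f * (norm c * (B * measure lborel ?C))"
      unfolding l2_inner_def c_def[symmetric] norm_mult by (simp add: mult_ac)
  qed
qed

lemma Bcontfun_scaled_inverse:
  fixes u :: "'a::topological_space \<Rightarrow> 'b::real_normed_algebra_1"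
  assumes "continuous_on UNIV u" "\<And>x. norm (u x) \<le> 1"
  shows "apply_bcontfun (Bcontfun (\<lambda>x. c * u x)) = (\<lambda>x. c * u x)"
proof (intro Bcontfun_inverse bcontfun_normI[where b="norm c"])
  show "continuous_on UNIV (\<lambda>x. c * u x)"
    using assms(1) by (intro continuous_on_mult continuous_on_const)
  show "norm (c * u x) \<le> norm c" for x
    using norm_mult_ineq[of c "u x"] mult_left_le[OF assms(2)[of x] norm_ge_zero[of c]] by linarith
qed

lemma summable_on_Bcontfun_series:
  fixes c :: "'i \<Rightarrow> complex" and u :: "'i \<Rightarrow> 'a::metric_space \<Rightarrow> complex"
  assumes c: "c summable_on A" and u: "\<And>m x. norm (u m x) \<le> 1" and cont: "\<And>m. continuous_on UNIV (u m)"
  shows "(\<lambda>m. Bcontfun (\<lambda>x. c m * u m x)) summable_on A"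
proof (rule abs_summable_summable)
  from c have "(\<lambda>m. norm (c m)) summable_on A"
    by (simp only: summable_on_iff_abs_summable_on_complex)
  then show "(\<lambda>m. norm (Bcontfun (\<lambda>x. c m * u m x))) summable_on A"
  proof (rule Infinite_Sum.abs_summable_on_comparison_test)
    show "norm (Bcontfun (\<lambda>x. c m * u m x)) \<le> norm (c m)" for m
      by (rule norm_bound) (simp add: Bcontfun_scaled_inverse[OF cont u] norm_mult mult_left_le[OF u])
  qed
qed

lemma
  fixes c :: "'i \<Rightarrow> complex" and u :: "'i \<Rightarrow> real^'n \<Rightarrow> complex"
  assumes c: "c summable_on A" and u: "\<And>m x. norm (u m x) \<le> 1" and cont: "\<And>m. continuous_on UNIV (u m)"
  shows continuous_on_infsum_series: "continuous_on UNIV (\<lambda>x. \<Sum>\<^sub>\<infinity>m\<in>A. c m * u m x)"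
    and has_sum_l2_inner_infsum_series: "continuous_on UNIV h \<Longrightarrow>
      ((\<lambda>m. c m * l2_inner (u m) h) has_sum l2_inner (\<lambda>x. \<Sum>\<^sub>\<infinity>m\<in>A. c m * u m x) h) A"
proof -
  define S where "S = (\<Sum>\<^sub>\<infinity>m\<in>A. Bcontfun (\<lambda>x. c m * u m x))"
  have S: "((\<lambda>m. Bcontfun (\<lambda>x. c m * u m x)) has_sum S) A"
    unfolding S_def using summable_on_Bcontfun_series[OF c u cont] by (rule has_sum_infsum)
  note bterm = Bcontfun_scaled_inverse[OF cont u]
  have S_eq: "(\<lambda>x. \<Sum>\<^sub>\<infinity>m\<in>A. c m * u m x) = apply_bcontfun S"
  proof
    fix x
    show "(\<Sum>\<^sub>\<infinity>m\<in>A. c m * u m x) = S x"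
      using has_sum_bounded_linear[OF bounded_linear_apply_bcontfun S, of x] by (simp add: bterm infsumI)
  qed
  show "continuous_on UNIV (\<lambda>x. \<Sum>\<^sub>\<infinity>m\<in>A. c m * u m x)"
    unfolding S_eq by simp
  assume "continuous_on UNIV h"
  from has_sum_bounded_linear[OF bounded_linear_l2_inner_bcontfun[OF this] S]
  show "((\<lambda>m. c m * l2_inner (u m) h) has_sum l2_inner (\<lambda>x. \<Sum>\<^sub>\<infinity>m\<in>A. c m * u m x) h) A"
    unfolding S_eq bterm l2_inner_def by (simp add: mult.assoc mult.left_commute)
qed

definition alias_series :: "(int^'n \<Rightarrow> complex) \<Rightarrow> nat \<Rightarrow> int^'n \<Rightarrow> real^'n \<Rightarrow> complex"
  where
  "alias_series G N l x = (\<Sum>\<^sub>\<infinity>m. G (aliased N m l) * phi (aliased N m l) x)"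

lemma psi_eq_alias_series:
  "psi G N l = (\<lambda>x. of_real (1 / sqrt (G_l1 G N l)) * alias_series G N l x)"
  by (simp add: psi_def alias_series_def fun_eq_iff)

lemma alias_series_eq_infsum_aliases:
  "N > 0 \<Longrightarrow> alias_series G N l x = (\<Sum>\<^sub>\<infinity>k. if aliases N k l then G k * phi k x else 0)"
  unfolding alias_series_def by (rule infsum_aliases[symmetric])

lemma alias_series_aliased [simp]: "N > 0 \<Longrightarrow> alias_series G N (aliased N m l) = alias_series G N l"
  by (simp add: fun_eq_iff alias_series_eq_infsum_aliases)

lemma
  assumes "G summable_on UNIV" "N > 0"
  shows continuous_on_alias_series: "continuous_on UNIV (alias_series G N l)"
    and has_sum_l2_inner_alias_series: "continuous_on UNIV h \<Longrightarrow>
      ((\<lambda>m. G (aliased N m l) * l2_inner (phi (aliased N m l)) h) has_sum l2_inner (alias_series G N l) h) UNIV"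
  using continuous_on_infsum_series[OF summable_on_aliased[OF assms(2,1)] norm_phi[THEN eq_refl] continuous_on_phi]
    has_sum_l2_inner_infsum_series[OF summable_on_aliased[OF assms(2,1)] norm_phi[THEN eq_refl] continuous_on_phi]
  by (simp_all add: alias_series_def[abs_def])

lemma l2_inner_alias_series_phi:
  assumes "G summable_on UNIV" "N > 0"
  shows "l2_inner (alias_series G N l) (phi k) = (if aliases N k l then G k else 0)"
proof -
  have "((\<lambda>m. G (aliased N m l) * (if aliased N m l = k then 1 else 0))
      has_sum l2_inner (alias_series G N l) (phi k)) UNIV"
    using has_sum_l2_inner_alias_series[OF assms continuous_on_phi] by (simp add: l2_inner_phi)
  then have "l2_inner (alias_series G N l) (phi k)
      = (\<Sum>\<^sub>\<infinity>m. G (aliased N m l) * (if aliased N m l = k then 1 else 0))"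
    by (simp add: infsumI)
  also have "\<dots> = (\<Sum>\<^sub>\<infinity>k'. if aliases N k' l then G k' * (if k' = k then 1 else 0) else 0)"
    by (rule infsum_aliases[OF assms(2), symmetric])
  also have "\<dots> = (\<Sum>\<^sub>\<infinity>k'\<in>{k}. if aliases N k' l then G k' * (if k' = k then 1 else 0) else 0)"
    by (rule infsum_cong_neutral) auto
  finally show ?thesis
    by simp
qed

lemma l2_inner_alias_series:
  assumes "G summable_on UNIV" "N > 0"
  shows "l2_inner (alias_series G N k) (alias_series G N l)
       = (if aliases N k l then of_real ((G_l2 G N k)\<^sup>2) else 0)"
proof -
  let ?X = "l2_inner (alias_series G N k) (alias_series G N l)"
  have has_sum_X: "((\<lambda>m. G (aliased N m k) * l2_inner (phi (aliased N m k)) (alias_series G N l)) has_sum ?X) UNIV"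
    using has_sum_l2_inner_alias_series[OF assms continuous_on_alias_series[OF assms]] .
  have inner_phi: "l2_inner (phi (aliased N m k)) (alias_series G N l)
      = (if aliases N k l then cnj (G (aliased N m k)) else 0)" for m
    using l2_inner_cnj[of "phi (aliased N m k)"] l2_inner_alias_series_phi[OF assms] by simp
  show ?thesis
  proof (cases "aliases N k l")
    case True
    have "G (aliased N m k) * l2_inner (phi (aliased N m k)) (alias_series G N l)
        = of_real ((cmod (G (aliased N m k)))\<^sup>2)" for m
      using True complex_norm_square[of "G (aliased N m k)"] by (simp add: inner_phi)
    then have of_real_has_sum: "((\<lambda>m. of_real ((cmod (G (aliased N m k)))\<^sup>2)) has_sum ?X) UNIV"
      using has_sum_X by simp
    then have re: "((\<lambda>m. (cmod (G (aliased N m k)))\<^sup>2) has_sum Re ?X) UNIV"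
      using has_sum_Re by force
    then have "?X = of_real (Re ?X)"
      using has_sum_unique[OF of_real_has_sum has_sum_of_real[OF re]] by simp
    moreover have "(G_l2 G N k)\<^sup>2 = Re ?X"
      using re by (simp add: G_l2_def infsumI has_sum_nonneg)
    ultimately show ?thesis
      using True by simp
  next
    case False
    then show ?thesis
      using has_sum_unique[OF has_sum_X] by (simp add: inner_phi)
  qed
qed

section \<open>The eigenfunctions\<close>

lemma sum_grid_kernel_phi:
  fixes K :: "real^'n \<Rightarrow> real^'n \<Rightarrow> real"
  assumes G: "G summable_on UNIV"
    and K: "\<forall>x\<in>torus. \<forall>x'\<in>torus.
      complex_of_real (K x x') = (\<Sum>\<^sub>\<infinity>k. G k * phi k x * cnj (phi k x'))"
    and N: "even N" "N > 0" and x: "x \<in> torus"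
  shows "(\<Sum>p\<in>grid_idx N. of_real (K x (grid_pt N p)) * phi j (grid_pt N p))
       = of_nat N ^ CARD('n) * alias_series G N j x"
proof -
  let ?P = "grid_idx N :: (nat^'n) set"
  define T where "T p k = G k * (phi k x * (cnj (phi k (grid_pt N p)) * phi j (grid_pt N p)))" for p k
  have T: "(T p has_sum of_real (K x (grid_pt N p)) * phi j (grid_pt N p)) UNIV" if "p \<in> ?P" for p
  proof -
    have "T p summable_on UNIV"
      unfolding T_def by (rule summable_on_mult_bounded[OF G, of _ 1]) (simp add: norm_mult)
    moreover have "infsum (T p) UNIV = of_real (K x (grid_pt N p)) * phi j (grid_pt N p)"
      using K x grid_pt_in_torus[OF that] unfolding T_def
      by (simp add: mult.assoc infsum_cmult_left'[symmetric])
    ultimately show ?thesis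
      by (simp add: has_sum_iff)
  qed
  have "(\<Sum>p\<in>?P. T p k) = of_nat N ^ CARD('n) * (if aliases N k j then G k * phi k x else 0)" for k
    using sum_phi_grid[OF N, of "j - k"] aliases_sym[of N k j]
    by (simp add: T_def cnj_phi_mult aliases_def flip: sum_distrib_left)
  then have "((\<lambda>k. of_nat N ^ CARD('n) * (if aliases N k j then G k * phi k x else 0)) has_sum
      (\<Sum>p\<in>?P. of_real (K x (grid_pt N p)) * phi j (grid_pt N p))) UNIV"
    using has_sum_sum[where P="?P" and f=T, OF finite_grid_idx T] by simp
  then have "(\<Sum>p\<in>?P. of_real (K x (grid_pt N p)) * phi j (grid_pt N p))
      = (\<Sum>\<^sub>\<infinity>k. of_nat N ^ CARD('n) * (if aliases N k j then G k * phi k x else 0))"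
    by (rule infsumI[symmetric])
  then show ?thesis
    by (simp only: infsum_cmult_right' alias_series_eq_infsum_aliases[OF N(2)])
qed

lemma T_op_cmult: "T_op K N (\<lambda>x. c * f x) x = c * T_op K N f x"
  by (simp add: T_op_def sum_distrib_left mult_ac)

lemma has_sum_G_l1:
  assumes "G summable_on UNIV" "N > 0"
  shows "((\<lambda>m. cmod (G (aliased N m l))) has_sum G_l1 G N l) UNIV"
proof -
  have "(\<lambda>m. cmod (G (aliased N m l))) summable_on UNIV"
    using summable_on_aliased[OF assms(2,1)] by (simp only: summable_on_iff_abs_summable_on_complex)
  then show ?thesis
    by (simp add: G_l1_def)
qed

lemma infsum_aliased_eq_G_l1:
  assumes "\<forall>k. Im (G k) = 0 \<and> 0 \<le> Re (G k)" "G summable_on UNIV" "N > 0"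
  shows "(\<Sum>\<^sub>\<infinity>m. G (aliased N m l)) = of_real (G_l1 G N l)"
proof -
  have "G k = of_real (cmod (G k))" for k
    using assms(1) by (simp add: cmod_eq_Re complex_eq_iff)
  then have "(\<lambda>m. G (aliased N m l)) = (\<lambda>m. of_real (cmod (G (aliased N m l))))"
    by metis
  moreover have "((\<lambda>m. complex_of_real (cmod (G (aliased N m l)))) has_sum of_real (G_l1 G N l)) UNIV"
    by (rule has_sum_of_real) (rule has_sum_G_l1[OF assms(2,3)])
  ultimately show ?thesis
    by (simp add: infsumI)
qed

lemma grid_kernel_matrix_invertible_complex:
  fixes v :: "nat^'n \<Rightarrow> complex"
  assumes inv: "grid_kernel_matrix_invertible K N"
    and Kv: "\<forall>p\<in>grid_idx N. (\<Sum>q\<in>grid_idx N. of_real (K (grid_pt N p) (grid_pt N q)) * v q) = 0"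
    and q: "q \<in> grid_idx N"
  shows "v q = 0"
proof -
  have inj: "c q = 0" if "\<forall>p\<in>grid_idx N. (\<Sum>q\<in>grid_idx N. K (grid_pt N p) (grid_pt N q) * c q) = 0"
    for c :: "nat^'n \<Rightarrow> real"
    using inv q that unfolding grid_kernel_matrix_invertible_def by blast
  have "Re (v q) = 0"
    using arg_cong[where f=Re, OF Kv[rule_format]] by (intro inj) simp
  moreover have "Im (v q) = 0"
    using arg_cong[where f=Im, OF Kv[rule_format]] by (intro inj) simp
  ultimately show ?thesis
    by (simp add: complex_eq_iff)
qed

lemma G_l1_pos:
  fixes K :: "real^'n \<Rightarrow> real^'n \<Rightarrow> real"
  assumes G: "G summable_on UNIV"
    and K: "\<forall>x\<in>torus. \<forall>x'\<in>torus.
      complex_of_real (K x x') = (\<Sum>\<^sub>\<infinity>k. G k * phi k x * cnj (phi k x'))"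
    and N: "even N" "N > 0" and inv: "grid_kernel_matrix_invertible K N"
  shows "0 < G_l1 G N l"
proof (rule ccontr)
  assume "\<not> 0 < G_l1 G N l"
  moreover have "0 \<le> G_l1 G N l"
    using has_sum_G_l1[OF G N(2)] by (rule has_sum_nonneg) simp
  ultimately have "G_l1 G N l \<le> 0"
    by simp
  then have "cmod (G (aliased N m l)) = 0" for m
    using has_sum_G_l1[OF G N(2)]
    by (intro nonneg_infsum_le_0D[where A=UNIV]) (auto simp: has_sum_iff)
  then have "alias_series G N l = (\<lambda>x. 0)"
    by (simp add: alias_series_def fun_eq_iff)
  then have "\<forall>p\<in>grid_idx N.
      (\<Sum>q\<in>grid_idx N. of_real (K (grid_pt N p) (grid_pt N q)) * phi l (grid_pt N q)) = 0"
    using sum_grid_kernel_phi[OF G K N grid_pt_in_torus] by simp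
  moreover have "(0 :: nat^'n) \<in> grid_idx N"
    using N(2) by (simp add: grid_idx_def)
  ultimately have "phi l (grid_pt N (0 :: nat^'n)) = 0"
    by (rule grid_kernel_matrix_invertible_complex[OF inv])
  then show False
    using norm_phi[of l "grid_pt N 0"] by simp
qed

lemma T_op_alias_series:
  fixes K :: "real^'n \<Rightarrow> real^'n \<Rightarrow> real"
  assumes G_nonneg: "\<forall>k. Im (G k) = 0 \<and> 0 \<le> Re (G k)" and G: "G summable_on UNIV"
    and K: "\<forall>x\<in>torus. \<forall>x'\<in>torus.
      complex_of_real (K x x') = (\<Sum>\<^sub>\<infinity>k. G k * phi k x * cnj (phi k x'))"
    and N: "even N" "N > 0" and x: "x \<in> torus"
  shows "T_op K N (alias_series G N l) x = of_real (G_l1 G N l) * alias_series G N l x"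
proof -
  let ?P = "grid_idx N :: (nat^'n) set" and ?a = "\<lambda>m. aliased N m l"
  define W where "W p = (\<lambda>m. G (?a m) * (of_real (K x (grid_pt N p)) * phi (?a m) (grid_pt N p)))" for p
  have W: "(W p has_sum of_real (K x (grid_pt N p)) * alias_series G N l (grid_pt N p)) UNIV" for p
  proof -
    have "W p summable_on UNIV"
      unfolding W_def
      by (rule summable_on_mult_bounded[OF summable_on_aliased[OF N(2) G], of _ "\<bar>K x (grid_pt N p)\<bar>"])
        (simp add: norm_mult)
    then show ?thesis
      by (simp add: has_sum_iff W_def alias_series_def mult.left_commute flip: infsum_cmult_right')
  qed
  have "(\<Sum>p\<in>?P. W p m) = G (?a m) * (of_nat N ^ CARD('n) * alias_series G N l x)" for m
    using sum_grid_kernel_phi[OF G K N x, of "?a m"] N(2) by (simp add: W_def flip: sum_distrib_left)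
  then have "((\<lambda>m. G (?a m) * (of_nat N ^ CARD('n) * alias_series G N l x)) has_sum
      (\<Sum>p\<in>?P. of_real (K x (grid_pt N p)) * alias_series G N l (grid_pt N p))) UNIV"
    using has_sum_sum[where P="?P" and f=W, OF finite_grid_idx W] by simp
  then have "(\<Sum>p\<in>?P. of_real (K x (grid_pt N p)) * alias_series G N l (grid_pt N p))
      = (\<Sum>\<^sub>\<infinity>m. G (?a m) * (of_nat N ^ CARD('n) * alias_series G N l x))"
    by (rule infsumI[symmetric])
  also have "\<dots> = of_real (G_l1 G N l) * (of_nat N ^ CARD('n) * alias_series G N l x)"
    by (simp only: infsum_cmult_left' infsum_aliased_eq_G_l1[OF G_nonneg G N(2)])
  finally have "(\<Sum>p\<in>?P. of_real (K x (grid_pt N p)) * alias_series G N l (grid_pt N p))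
      = of_real (G_l1 G N l) * (of_nat N ^ CARD('n) * alias_series G N l x)" .
  then show ?thesis
    using N(2) by (simp add: T_op_def)
qed

lemma T_op_psi:
  fixes K :: "real^'n \<Rightarrow> real^'n \<Rightarrow> real"
  assumes "\<forall>k. Im (G k) = 0 \<and> 0 \<le> Re (G k)" "G summable_on UNIV"
    and "\<forall>x\<in>torus. \<forall>x'\<in>torus.
      complex_of_real (K x x') = (\<Sum>\<^sub>\<infinity>k. G k * phi k x * cnj (phi k x'))"
    and "even N" "N > 0" "x \<in> torus"
  shows "T_op K N (psi G N l) x = of_real (G_l1 G N l) * psi G N l x"
  unfolding psi_eq_alias_series T_op_cmult T_op_alias_series[OF assms] by (simp add: mult_ac)

lemma rkhs_norm_psi:
  assumes G_nonneg: "\<forall>k. Im (G k) = 0 \<and> 0 \<le> Re (G k)" and G: "G summable_on UNIV"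
    and N: "N > 0" and pos: "0 < G_l1 G N l"
  shows "rkhs_norm G (psi G N l) = 1"
proof -
  define c where "c = 1 / sqrt (G_l1 G N l)"
  have "(cmod (l2_inner (psi G N l) (phi k)))\<^sup>2 / Re (G k) = (if aliases N k l then c\<^sup>2 * cmod (G k) else 0)" for k
  proof -
    have "cmod (G k) = Re (G k)"
      using G_nonneg by (simp add: cmod_eq_Re)
    \<comment> \<open>If G k = 0 both sides vanish, by the convention x / 0 = 0.\<close>
    then have "(cmod (of_real c * G k))\<^sup>2 / Re (G k) = c\<^sup>2 * cmod (G k)"
      by (simp add: norm_mult power_mult_distrib power2_eq_square)
    then show ?thesis
      unfolding psi_eq_alias_series c_def[symmetric] l2_inner_cmult_left l2_inner_alias_series_phi[OF G N]
      by simp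
  qed
  then have "(\<Sum>\<^sub>\<infinity>k. (cmod (l2_inner (psi G N l) (phi k)))\<^sup>2 / Re (G k))
      = (\<Sum>\<^sub>\<infinity>m. c\<^sup>2 * cmod (G (aliased N m l)))"
    by (simp add: infsum_aliases[OF N])
  also have "\<dots> = c\<^sup>2 * G_l1 G N l"
    by (simp add: infsum_cmult_right' G_l1_def)
  also have "\<dots> = 1"
    using pos by (simp add: c_def power_divide)
  finally show ?thesis
    by (simp add: rkhs_norm_def)
qed

lemma l2_norm_psi:
  assumes "G summable_on UNIV" "N > 0"
  shows "l2_norm (psi G N l) = G_l2 G N l / sqrt (G_l1 G N l)"
proof -
  have "0 \<le> G_l1 G N l"
    by (simp add: G_l1_def infsum_nonneg)
  then have "Re (l2_inner (psi G N l) (psi G N l)) = (G_l2 G N l / sqrt (G_l1 G N l))\<^sup>2"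
    unfolding psi_eq_alias_series l2_inner_cmult_left l2_inner_cmult_right l2_inner_alias_series[OF assms]
    by (simp add: power_divide)
  moreover have "0 \<le> G_l2 G N l / sqrt (G_l1 G N l)"
    by (simp add: G_l2_def G_l1_def infsum_nonneg)
  ultimately show ?thesis
    unfolding l2_norm_def by (simp only: real_sqrt_abs abs_of_nonneg)
qed

lemma l2_inner_psi_orthogonal:
  assumes "G summable_on UNIV" "N > 0"
    and "\<forall>i. 0 \<le> k $ i \<and> k $ i < int N" "\<forall>i. 0 \<le> l $ i \<and> l $ i < int N" "k \<noteq> l"
  shows "l2_inner (psi G N l) (psi G N k) = 0"
proof -
  have "\<not> aliases N l k"
    using aliases_imp_eq assms(3-5) by blast
  then show ?thesis
    unfolding psi_eq_alias_series l2_inner_cmult_left l2_inner_cmult_right l2_inner_alias_series[OF assms(1,2)]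
    by simp
qed

theorem lemma13:
  fixes g :: "real^'n \<Rightarrow> real" and M :: "real^'n^'n" and N :: nat and l :: "int^'n"
  defines "K \<equiv> kern g M" and "G \<equiv> fcoef g M"
  assumes pd: "pd_kernel torus K"
    and G_nonneg: "\<forall>k. Im (G k) = 0 \<and> 0 \<le> Re (G k)"
    and G_summable: "G summable_on UNIV"
    and K_rkhs: "\<forall>x\<in>torus. \<forall>x'\<in>torus.
        complex_of_real (K x x') = (\<Sum>\<^sub>\<infinity>k. G k * phi k x * cnj (phi k x'))"
    and N_even: "even N"
    and inv: "grid_kernel_matrix_invertible K N"
    and l: "\<forall>i. 0 \<le> l $ i \<and> l $ i < int N"
  shows "(\<forall>x\<in>torus. T_op K N (psi G N l) x = complex_of_real (G_l1 G N l) * psi G N l x)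
       \<and> rkhs_norm G (psi G N l) = 1
       \<and> l2_norm (psi G N l) = G_l2 G N l / sqrt (G_l1 G N l)
       \<and> (\<forall>k. (\<forall>i. 0 \<le> k $ i \<and> k $ i < int N) \<longrightarrow> k \<noteq> l \<longrightarrow>
             l2_inner (psi G N l) (psi G N k) = 0)"
proof -
  have N_pos: "N > 0"
    using l by (metis of_nat_0_less_iff order_le_less_trans)
  have "0 < G_l1 G N l"
    by (rule G_l1_pos[OF G_summable K_rkhs N_even N_pos inv])
  then show ?thesis
    using T_op_psi[OF G_nonneg G_summable K_rkhs N_even N_pos]
      rkhs_norm_psi[OF G_nonneg G_summable N_pos]
      l2_norm_psi[OF G_summable N_pos] l2_inner_psi_orthogonal[OF G_summable N_pos _ l]
    by blast
qed

end
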